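(* Let $\gamma\in(0,1)$ and $c,l>0$, and let $\beta=\frac{7}{40}$. Let $\{a_n\}_{n\in\mathbb{N}}$ be a sequence of positive numbers such that $\sum_{n=1}^\infty a_n^\gamma$ converges, $a=\sum_{n=1}^\infty a_n<l$, and $$\sum_{n=1}^\infty a_n^\gamma\le c\left(\frac{2-\gamma}{\gamma}\right)^{\frac{\gamma-2}{2}}\beta^{-\frac{\gamma}{2}}.$$ Let $g$ be the function constructed from $\{a_n\}$ as below. Then $g$ is non-negative, even, of positive type, supported in $[-l,l]$, and $$\hat g(k)\ge e^{-c|k|^\gamma}\qquad\text{for all }k\in\mathbb{R}.$$
   Context: Let $\eta(x)=\frac32(1-|x|)^2$ for $|x|\le1$ and $\eta(x)=0$ otherwise. Given a positive summable sequence $\{a_n\}$, set $\eta_n(x)=\frac{1}{a_n}\eta(x/a_n)$, $g_1=\eta_1$, $g_{n+1}=g_n*\eta_{n+1}$; the $g_n$ converge uniformly to a smooth compactly supported function $g$. Fourier transform: $\hat f(k)=\int e^{-ikx}f(x)\,\mathrm{d}x$; $f$ is of positive type iff $\hat f\ge0$. *)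

theory Defs
  imports "HOL-Analysis.Analysis"
begin

definition eta :: "real \<Rightarrow> real" where
  "eta x = (if \<bar>x\<bar> \<le> 1 then 3/2 * (1 - \<bar>x\<bar>)^2 else 0)"

text \<open>eta_n(x) = (1/a_n) eta(x/a_n); the sequence a is 1-indexed (a 0 is unused).\<close>
definition eta_n :: "(nat \<Rightarrow> real) \<Rightarrow> nat \<Rightarrow> real \<Rightarrow> real" where
  "eta_n a n x = (1 / a n) * eta (x / a n)"

definition conv :: "(real \<Rightarrow> real) \<Rightarrow> (real \<Rightarrow> real) \<Rightarrow> real \<Rightarrow> real" where
  "conv f h x = (LINT y|lborel. f (x - y) * h y)"

text \<open>gs a n = g_{n+1}: g_1 = eta_1, g_{n+1} = g_n * eta_{n+1}.\<close>
primrec gs :: "(nat \<Rightarrow> real) \<Rightarrow> nat \<Rightarrow> real \<Rightarrow> real" where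
  "gs a 0 = eta_n a 1"
| "gs a (Suc n) = conv (gs a n) (eta_n a (n + 2))"

definition g_lim :: "(nat \<Rightarrow> real) \<Rightarrow> real \<Rightarrow> real" where
  "g_lim a x = lim (\<lambda>n. gs a n x)"

definition fourier :: "(real \<Rightarrow> real) \<Rightarrow> real \<Rightarrow> complex" where
  "fourier f k = integral\<^sup>L lborel (\<lambda>x. exp (- (\<i> * complex_of_real (k * x))) * complex_of_real (f x))"

definition positive_type :: "(real \<Rightarrow> real) \<Rightarrow> bool" where
  "positive_type f \<longleftrightarrow> (\<forall>k. Im (fourier f k) = 0 \<and> Re (fourier f k) \<ge> 0)"

end

theory Submission
  imports Defs
begin

text \<open>
  The Fourier transform of \<open>\<eta>\<close> is \<open>eta_hat k = 6 (k - sin k) / k^3\<close>. The elementary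
  inequality \<open>k^3 \<le> 6 (1 + 7/40 k^2) (k - sin k)\<close> for \<open>k \<ge> 0\<close> gives
  \<open>eta_hat k \<ge> 1 / (1 + 7/40 k^2)\<close>, and \<open>ln (1 + u) \<le> C u powr (\<gamma>/2)\<close>, a consequence of
  Young's inequality, turns this into \<open>eta_hat k \<ge> exp (- K |k| powr \<gamma>)\<close>. Convolution
  multiplies Fourier transforms, so the transform of \<open>g\<^sub>n\<close> is \<open>\<Prod>\<^sub>j eta_hat (a\<^sub>j k)\<close>, which is
  at least \<open>exp (- K (\<Sum>\<^sub>j a\<^sub>j powr \<gamma>) |k| powr \<gamma>)\<close>; the hypothesis on \<open>\<Sum>\<^sub>j a\<^sub>j powr \<gamma>\<close>
  says precisely \<open>K \<Sum>\<^sub>j a\<^sub>j powr \<gamma> \<le> c\<close>.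

  All \<open>g\<^sub>n\<close> are non-negative, even, bounded by \<open>3 / (2 a\<^sub>1)\<close>, \<open>3 / a\<^sub>1^2\<close>-Lipschitz and vanish
  outside \<open>[-\<Sum> a\<^sub>j, \<Sum> a\<^sub>j]\<close>. Convolving an \<open>L\<close>-Lipschitz function with \<open>\<eta>\<^sub>n\<close> moves it by
  at most \<open>L a\<^sub>n\<close>, so the \<open>g\<^sub>n\<close> converge; these properties pass to the limit, and so does
  the bound on the Fourier transform, by dominated convergence.
\<close>

section \<open>The inequality \<open>t\<^sup>3 \<le> 6 (1 + 7/40 t\<^sup>2) (t - sin t)\<close>\<close>

lemma sin_le_taylor6: "sin (t::real) \<le> t - t^3/6 + t^5/120 + t^6/720"
proof -
  have "\<bar>sin t - (\<Sum>m<6. sin_coeff m * t ^ m)\<bar> \<le> inverse (fact 6) * \<bar>t\<bar> ^ 6"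
    by (rule Maclaurin_sin_bound)
  moreover have "(\<Sum>m<6. sin_coeff m * t ^ m) = t - t^3/6 + t^5/120"
    by (simp add: sin_coeff_def lessThan_nat_numeral fact_numeral)
  moreover have "\<bar>t\<bar>^6 = t^6" by (simp add: power_even_abs)
  ultimately have "\<bar>sin t - (t - t^3/6 + t^5/120)\<bar> \<le> t^6/720" by (simp add: fact_numeral)
  then show ?thesis by linarith
qed

lemma cos_le_taylor6: "cos (y::real) \<le> 1 - y^2/2 + y^4/24 + y^6/720"
proof -
  obtain t where t: "cos y = (\<Sum>m<6. cos_coeff m * y ^ m) + cos (t + 1/2 * real 6 * pi) / fact 6 * y ^ 6"
    using Maclaurin_cos_expansion[of y 6] by blast
  have "(\<Sum>m<6. cos_coeff m * y ^ m) = 1 - y^2/2 + y^4/24"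
    by (simp add: cos_coeff_def lessThan_nat_numeral fact_numeral)
  moreover have "cos (t + 1/2 * real 6 * pi) * y^6 \<le> 1 * y^6"
    by (intro mult_right_mono) (auto simp: zero_le_power_eq)
  ultimately show ?thesis using t by (simp add: fact_numeral)
qed

text \<open>
  With \<open>s = sin t\<close> the right-hand side is non-negative wherever the cubic
  \<open>t ((t - 21/2)\<^sup>2 + 39/4) / 20 - 6\<close> is, which holds on \<open>[13/10, 8]\<close> and \<open>[12, \<infinity>)\<close>.
  Elsewhere the Taylor polynomial of \<open>sin\<close>, the size of \<open>1 - sin t\<close> near \<open>5\<pi>/2\<close>, or
  \<open>sin t \<le> 0\<close> on \<open>[3\<pi>, 4\<pi>]\<close> take over.
\<close>
lemma six_mult_t_minus_sin_eq:
  fixes t s :: real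
  shows "6*(1 + 7/40*t^2)*(t - s) - t^3 = t*((t - 21/2)^2 + 39/4)/20 - 6 + (1 - s)*(6 + 21/20*t^2)"
  by (simp add: power2_eq_square power3_eq_cube field_simps)

lemma cubic_lower_bound_on_interval:
  fixes t u v :: real
  assumes "0 \<le> u" "u \<le> t" "t \<le> v" "v \<le> 21/2"
  shows "u*((21/2 - v)^2 + 39/4) \<le> t*((t - 21/2)^2 + 39/4)"
proof -
  have "(21/2 - v)^2 \<le> (21/2 - t)^2" using assms by (intro power_mono) auto
  then have "(21/2 - v)^2 \<le> (t - 21/2)^2" by (simp add: power2_commute)
  then show ?thesis using assms by (intro mult_mono) auto
qed

lemma t_minus_sin_bound_of_cubic:
  fixes t s :: real
  assumes "120 \<le> t*((t - 21/2)^2 + 39/4)" "s \<le> 1"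
  shows "t^3 \<le> 6*(1 + 7/40*t^2)*(t - s)"
proof -
  have "0 \<le> (1 - s)*(6 + 21/20*t^2)" using assms(2) by (intro mult_nonneg_nonneg) auto
  then show ?thesis using six_mult_t_minus_sin_eq[of t s] assms(1) by linarith
qed

lemma t_minus_sin_bound_on_interval:
  fixes t u v :: real
  assumes "0 \<le> u" "u \<le> t" "t \<le> v" "v \<le> 21/2" "120 \<le> u*((21/2 - v)^2 + 39/4)"
  shows "t^3 \<le> 6*(1 + 7/40*t^2)*(t - sin t)"
  using cubic_lower_bound_on_interval[OF assms(1-4)] assms(5)
  by (intro t_minus_sin_bound_of_cubic) auto

lemma t_minus_sin_bound_small:
  fixes t :: real
  assumes "0 \<le> t" "t \<le> 13/10"
  shows "t^3 \<le> 6*(1 + 7/40*t^2)*(t - sin t)"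
proof -
  have "t^3/6 - t^5/120 - t^6/720 \<le> t - sin t" using sin_le_taylor6[of t] by linarith
  then have "6*(1+7/40*t^2)*(t^3/6 - t^5/120 - t^6/720) \<le> 6*(1+7/40*t^2)*(t - sin t)"
    by (rule mult_left_mono) simp
  moreover have "6*(1+7/40*t^2)*(t^3/6 - t^5/120 - t^6/720) - t^3
      = t^5*(1/8 - t/120 - 7*t^2/800 - 7*t^3/4800)"
    by (simp add: field_simps eval_nat_numeral)
  moreover have "t^2 \<le> (13/10)^2" "t^3 \<le> (13/10)^3" using assms by (intro power_mono; simp)+
  then have "0 \<le> 1/8 - t/120 - 7*t^2/800 - 7*t^3/4800" using assms by (simp add: power_divide)
  then have "0 \<le> t^5*(1/8 - t/120 - 7*t^2/800 - 7*t^3/4800)" using assms by simp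
  ultimately show ?thesis by linarith
qed

lemma t_minus_sin_bound_mid:
  fixes t :: real
  assumes "13/10 \<le> t" "t \<le> 8"
  shows "t^3 \<le> 6*(1 + 7/40*t^2)*(t - sin t)"
proof -
  consider "t \<le> 14/10" | "14/10 \<le> t" "t \<le> 16/10" | "16/10 \<le> t" "t \<le> 19/10"
    | "19/10 \<le> t" "t \<le> 23/10" | "23/10 \<le> t" "t \<le> 28/10" | "28/10 \<le> t" "t \<le> 35/10"
    | "35/10 \<le> t" "t \<le> 45/10" | "45/10 \<le> t" "t \<le> 6" | "6 \<le> t" "t \<le> 7"
    | "7 \<le> t" "t \<le> 75/10" | "75/10 \<le> t" "t \<le> 78/10" | "78/10 \<le> t" by linarith
  then show ?thesis
  proof cases
    case 1 show ?thesis by (rule t_minus_sin_bound_on_interval[of "13/10" t "14/10"]) (use 1 assms in \<open>auto simp: power2_eq_square\<close>)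
  next
    case 2 show ?thesis by (rule t_minus_sin_bound_on_interval[of "14/10" t "16/10"]) (use 2 in \<open>auto simp: power2_eq_square\<close>)
  next
    case 3 show ?thesis by (rule t_minus_sin_bound_on_interval[of "16/10" t "19/10"]) (use 3 in \<open>auto simp: power2_eq_square\<close>)
  next
    case 4 show ?thesis by (rule t_minus_sin_bound_on_interval[of "19/10" t "23/10"]) (use 4 in \<open>auto simp: power2_eq_square\<close>)
  next
    case 5 show ?thesis by (rule t_minus_sin_bound_on_interval[of "23/10" t "28/10"]) (use 5 in \<open>auto simp: power2_eq_square\<close>)
  next
    case 6 show ?thesis by (rule t_minus_sin_bound_on_interval[of "28/10" t "35/10"]) (use 6 in \<open>auto simp: power2_eq_square\<close>)
  next
    case 7 show ?thesis by (rule t_minus_sin_bound_on_interval[of "35/10" t "45/10"]) (use 7 in \<open>auto simp: power2_eq_square\<close>)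
  next
    case 8 show ?thesis by (rule t_minus_sin_bound_on_interval[of "45/10" t 6]) (use 8 in \<open>auto simp: power2_eq_square\<close>)
  next
    case 9 show ?thesis by (rule t_minus_sin_bound_on_interval[of 6 t 7]) (use 9 in \<open>auto simp: power2_eq_square\<close>)
  next
    case 10 show ?thesis by (rule t_minus_sin_bound_on_interval[of 7 t "75/10"]) (use 10 in \<open>auto simp: power2_eq_square\<close>)
  next
    case 11 show ?thesis by (rule t_minus_sin_bound_on_interval[of "75/10" t "78/10"]) (use 11 in \<open>auto simp: power2_eq_square\<close>)
  next
    case 12 show ?thesis by (rule t_minus_sin_bound_on_interval[of "78/10" t 8]) (use 12 assms in \<open>auto simp: power2_eq_square\<close>)
  qed
qed

lemma sin_eq_cos_minus_5pi_half: "sin (t::real) = cos (t - 5/2*pi)"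
proof -
  have e: "5/2*pi = pi/2 + 2*pi" by simp
  have "sin (5/2*pi) = 1" "cos (5/2*pi) = 0" by (simp_all only: e sin_periodic cos_periodic) simp_all
  then show ?thesis by (simp add: cos_diff)
qed

text \<open>Near \<open>5\<pi>/2\<close> the cubic is negative, but \<open>1 - sin t \<ge> 97/250 (t - 5\<pi>/2)\<^sup>2\<close> makes up for it.\<close>
lemma t_minus_sin_bound_near_5pi_half:
  fixes t u v :: real
  assumes "8 \<le> u" "u \<le> t" "t \<le> v" "v \<le> 21/2" "t \<le> 3*pi"
    and lb: "0 \<le> u*((21/2 - v)^2 + 39/4)/20 - 6 + 97/250*(u - 7854/1000)^2*(6 + 21/20*u^2)"
  shows "t^3 \<le> 6*(1 + 7/40*t^2)*(t - sin t)"
proof -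
  define y where "y = t - 5/2*pi"
  have pi: "314159/100000 \<le> pi" "pi \<le> 31416/10000" using pi_approx by simp_all
  have y_lower: "0 \<le> u - 7854/1000" "u - 7854/1000 \<le> y" using assms pi unfolding y_def by linarith+
  have "y \<le> 15708/10000" using assms pi unfolding y_def by linarith
  then have "y^2 \<le> (15708/10000)^2" using y_lower by (intro power_mono) auto
  then have y2: "y^2 \<le> 24675/10000" by (simp add: power_divide)
  then have "y^4 \<le> (24675/10000)^2" by (metis power2_eq_square power_mono zero_le_power2 power_mult numeral_Bit0 mult_2)
  then have "y^4 \<le> 6089/1000" by (simp add: power_divide)
  then have "97/250 \<le> 1/2 - y^2/24 - y^4/720" using y2 by linarith
  then have "y^2 * (97/250) \<le> y^2 * (1/2 - y^2/24 - y^4/720)" by (intro mult_left_mono) auto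
  moreover have "y^2 * (1/2 - y^2/24 - y^4/720) \<le> 1 - sin t"
    using cos_le_taylor6[of y] sin_eq_cos_minus_5pi_half[of t]
    unfolding y_def by (simp add: field_simps eval_nat_numeral)
  moreover have "(u - 7854/1000)^2 \<le> y^2" using y_lower by (intro power_mono) auto
  ultimately have "97/250 * (u - 7854/1000)^2 \<le> 1 - sin t" by linarith
  moreover have "u^2 \<le> t^2" using assms by (intro power_mono) auto
  ultimately have "97/250 * (u - 7854/1000)^2 * (6 + 21/20*u^2) \<le> (1 - sin t)*(6 + 21/20*t^2)"
    by (intro mult_mono) auto
  moreover have "u*((21/2 - v)^2 + 39/4) \<le> t*((t - 21/2)^2 + 39/4)"
    using assms by (intro cubic_lower_bound_on_interval) auto
  ultimately show ?thesis using six_mult_t_minus_sin_eq[of t "sin t"] lb by linarith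
qed

lemma sin_nonpos_3pi_4pi:
  fixes t :: real
  assumes "3*pi \<le> t" "t \<le> 4*pi"
  shows "sin t \<le> 0"
proof -
  have "t = ((t - 3*pi) + 2*pi) + pi" by simp
  then have "sin t = - sin (t - 3*pi)" by (metis sin_periodic_pi sin_periodic)
  moreover have "0 \<le> sin (t - 3*pi)" using assms by (intro sin_ge_zero) auto
  ultimately show ?thesis by simp
qed

lemma t_minus_sin_bound_sin_nonpos:
  fixes t :: real
  assumes "0 \<le> t" "sin t \<le> 0"
  shows "t^3 \<le> 6*(1 + 7/40*t^2)*(t - sin t)"
proof -
  have "sin t * (6 + 21/20*t^2) \<le> 0" using assms by (intro mult_nonpos_nonneg) auto
  moreover have "6*(1 + 7/40*t^2)*(t - sin t) - t^3 = t^3/20 + 6*t - sin t * (6 + 21/20*t^2)"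
    by (simp add: power2_eq_square power3_eq_cube field_simps)
  moreover have "0 \<le> t^3" using assms by simp
  ultimately show ?thesis using assms by linarith
qed

lemma t_minus_sin_bound_large:
  fixes t :: real
  assumes "12 \<le> t"
  shows "t^3 \<le> 6*(1 + 7/40*t^2)*(t - sin t)"
proof (rule t_minus_sin_bound_of_cubic)
  have "(3/2)^2 \<le> (t - 21/2)^2" using assms by (intro power_mono) auto
  then have "12 \<le> (t - 21/2)^2 + 39/4" by (simp add: power2_eq_square)
  then have "12 * 12 \<le> t * ((t - 21/2)^2 + 39/4)" using assms by (intro mult_mono) auto
  then show "120 \<le> t * ((t - 21/2)^2 + 39/4)" by simp
qed simp

lemma t_minus_sin_bound:
  fixes t :: real
  assumes "0 \<le> t"
  shows "t^3 \<le> 6*(1 + 7/40*t^2)*(t - sin t)"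
proof -
  have pi: "314159/100000 \<le> pi" "pi \<le> 31416/10000" using pi_approx by simp_all
  consider "t \<le> 13/10" | "13/10 \<le> t" "t \<le> 8" | "8 \<le> t" "t \<le> 82/10" | "82/10 \<le> t" "t \<le> 87/10"
    | "87/10 \<le> t" "t \<le> 3*pi" | "3*pi \<le> t" "t \<le> 12" | "12 \<le> t" by linarith
  then show ?thesis
  proof cases
    case 1 with assms show ?thesis by (rule t_minus_sin_bound_small)
  next
    case 2 then show ?thesis by (rule t_minus_sin_bound_mid)
  next
    case 3 with pi show ?thesis
      by (intro t_minus_sin_bound_near_5pi_half[of 8 t "82/10"]) (auto simp: power2_eq_square)
  next
    case 4 with pi show ?thesis
      by (intro t_minus_sin_bound_near_5pi_half[of "82/10" t "87/10"]) (auto simp: power2_eq_square)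
  next
    case 5 with pi show ?thesis
      by (intro t_minus_sin_bound_near_5pi_half[of "87/10" t "943/100"]) (auto simp: power2_eq_square)
  next
    case 6 with pi assms show ?thesis by (intro t_minus_sin_bound_sin_nonpos sin_nonpos_3pi_4pi) auto
  next
    case 7 then show ?thesis by (rule t_minus_sin_bound_large)
  qed
qed

section \<open>Lower bounds for the Fourier transform of \<open>\<eta>\<close>\<close>

definition eta_hat :: "real \<Rightarrow> real" where
  "eta_hat k = (if k = 0 then 1 else 6 * (k - sin k) / k^3)"

lemma eta_hat_minus [simp]: "eta_hat (- k) = eta_hat k"
  by (simp add: eta_hat_def minus_divide_left)

lemma eta_hat_ge_inverse: "1 / (1 + 7/40 * k^2) \<le> eta_hat k"
proof -
  have pos: "1 / (1 + 7/40 * k^2) \<le> eta_hat k" if "0 < k" for k :: real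
  proof -
    have "k^3 \<le> 6*(1 + 7/40*k^2)*(k - sin k)" using t_minus_sin_bound[of k] that by simp
    moreover have "0 < k^3" "0 < 1 + 7/40*k^2" using that by (auto intro: add_pos_nonneg)
    ultimately show ?thesis using that by (simp add: eta_hat_def field_simps)
  qed
  consider "0 < k" | "k = 0" | "k < 0" by linarith
  then show ?thesis
  proof cases
    case 1 then show ?thesis by (rule pos)
  next
    case 2 then show ?thesis by (simp add: eta_hat_def)
  next
    case 3 then show ?thesis using pos[of "- k"] by simp
  qed
qed

lemma powr_le_Young:
  fixes p x :: real
  assumes "0 < p" "p < 1" "0 < x"
  shows "x powr (1 - p) \<le> (1 - p) powr (1 - p) * p powr p * (1 + x)"
proof -
  have "(x / (1-p)) powr (1-p) * (1/p) powr p \<le> (1-p) * (x/(1-p)) + p * (1/p)"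
    using assms by (intro Youngs_inequality_0) auto
  also have "\<dots> = 1 + x" using assms by simp
  also have "(x / (1-p)) powr (1-p) * (1/p) powr p = x powr (1-p) / ((1-p) powr (1-p) * p powr p)"
    using assms by (simp add: powr_divide powr_mult field_simps)
  finally show ?thesis using assms by (simp add: field_simps)
qed

lemma ln_one_plus_le_powr:
  fixes p u :: real
  assumes p: "0 < p" "p < 1" and u: "0 \<le> u"
  shows "ln (1 + u) \<le> ((1-p)/p) powr (1-p) * u powr p"
proof -
  define C where "C = ((1-p)/p) powr (1-p)"
  have Cp: "C * p = (1-p) powr (1-p) * p powr p"
  proof -
    have "C * p = (1-p) powr (1-p) * (p powr 1 / p powr (1-p))" using p by (simp add: C_def powr_divide)
    also have "p powr 1 / p powr (1-p) = p powr (1 - (1-p))" by (simp only: powr_diff)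
    finally show ?thesis by simp
  qed
  define h where "h x = C * x powr p - ln (1 + x)" for x
  have "h 0 \<le> h u"
  proof (rule DERIV_nonneg_imp_increasing_open[OF u])
    fix x assume x: "0 < x" "x < u"
    have deriv: "(h has_real_derivative (C * (p * x powr (p - 1)) - 1 / (1 + x))) (at x)"
      unfolding h_def using x
      by (auto intro!: derivative_eq_intros has_real_derivative_powr simp: field_simps)
    have "x powr (1 - p) \<le> C * p * (1 + x)" using powr_le_Young[OF p x(1)] Cp by simp
    then have "1 / (1 + x) \<le> C * p / x powr (1 - p)" using x by (simp add: field_simps)
    also have "C * p / x powr (1 - p) = C * (p * x powr (p - 1))"
      using x by (simp add: powr_diff powr_minus divide_inverse)
    finally show "\<exists>y. (h has_real_derivative y) (at x) \<and> 0 \<le> y" using deriv by auto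
  next
    show "continuous_on {0..u} h" unfolding h_def using p
      by (intro continuous_intros continuous_on_powr') auto
  qed
  then show ?thesis by (simp add: h_def C_def)
qed

definition decay_const :: "real \<Rightarrow> real" where
  "decay_const \<gamma> = ((2 - \<gamma>)/\<gamma>) powr ((2 - \<gamma>)/2) * (7/40) powr (\<gamma>/2)"

lemma decay_const_pos: "0 < \<gamma> \<Longrightarrow> \<gamma> < 2 \<Longrightarrow> 0 < decay_const \<gamma>"
  by (simp add: decay_const_def)

lemma decay_const_mult_le:
  fixes \<gamma> c S :: real
  assumes "0 < \<gamma>" "\<gamma> < 2"
    and "S \<le> c * ((2 - \<gamma>)/\<gamma>) powr ((\<gamma> - 2)/2) * (7/40) powr (- \<gamma>/2)"
  shows "decay_const \<gamma> * S \<le> c"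
proof -
  have "decay_const \<gamma> * S \<le> decay_const \<gamma> * (c * ((2 - \<gamma>)/\<gamma>) powr ((\<gamma> - 2)/2) * (7/40) powr (- \<gamma>/2))"
    using assms by (intro mult_left_mono) (auto simp: decay_const_def)
  also have "\<dots> = c * ((2 - \<gamma>)/\<gamma>) powr ((2 - \<gamma>)/2 + (\<gamma> - 2)/2) * (7/40) powr (\<gamma>/2 + - \<gamma>/2)"
    by (simp only: decay_const_def powr_add mult_ac)
  also have "\<dots> = c" using assms by (simp add: add_divide_distrib[symmetric])
  finally show ?thesis .
qed

lemma eta_hat_ge_exp:
  fixes \<gamma> t :: real
  assumes "0 < \<gamma>" "\<gamma> < 2"
  shows "exp (- (decay_const \<gamma> * \<bar>t\<bar> powr \<gamma>)) \<le> eta_hat t"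
proof -
  define u where "u = 7/40 * t^2"
  have u: "0 \<le> u" unfolding u_def by simp
  have t2: "t^2 = \<bar>t\<bar> powr 2" by (simp add: powr_numeral)
  have "u powr (\<gamma>/2) = (7/40) powr (\<gamma>/2) * (\<bar>t\<bar> powr 2) powr (\<gamma>/2)"
    unfolding u_def t2 by (rule powr_mult)
  also have "(\<bar>t\<bar> powr 2) powr (\<gamma>/2) = \<bar>t\<bar> powr \<gamma>" by (simp only: powr_powr) simp
  finally have u_powr: "u powr (\<gamma>/2) = (7/40) powr (\<gamma>/2) * \<bar>t\<bar> powr \<gamma>" .
  have "ln (1 + u) \<le> ((1 - \<gamma>/2)/(\<gamma>/2)) powr (1 - \<gamma>/2) * u powr (\<gamma>/2)"
    using assms u by (intro ln_one_plus_le_powr) auto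
  moreover have "(1 - \<gamma>/2)/(\<gamma>/2) = (2 - \<gamma>)/\<gamma>" "1 - \<gamma>/2 = (2 - \<gamma>)/2"
    using assms by (simp_all add: field_simps)
  ultimately have "ln (1 + u) \<le> decay_const \<gamma> * \<bar>t\<bar> powr \<gamma>"
    by (simp add: u_powr decay_const_def mult.assoc)
  then have "exp (- (decay_const \<gamma> * \<bar>t\<bar> powr \<gamma>)) \<le> exp (- ln (1 + u))" by simp
  also have "exp (- ln (1 + u)) = 1 / (1 + u)" using u by (simp add: exp_minus field_simps)
  also have "\<dots> \<le> eta_hat t" unfolding u_def by (rule eta_hat_ge_inverse)
  finally show ?thesis .
qed

lemma prod_eta_hat_ge_exp:
  fixes \<gamma> c k :: real and b :: "nat \<Rightarrow> real" and J :: "nat set"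
  assumes "0 < \<gamma>" "\<gamma> < 2" "\<And>j. 0 \<le> b j"
    and "decay_const \<gamma> * (\<Sum>j\<in>J. b j powr \<gamma>) \<le> c"
  shows "exp (- c * \<bar>k\<bar> powr \<gamma>) \<le> (\<Prod>j\<in>J. eta_hat (b j * k))"
proof (cases "finite J")
  case True
  have "exp (- c * \<bar>k\<bar> powr \<gamma>) \<le> exp (- (decay_const \<gamma> * (\<Sum>j\<in>J. b j powr \<gamma>) * \<bar>k\<bar> powr \<gamma>))"
    using assms(4) by (simp add: mult_right_mono)
  also have "\<dots> = (\<Prod>j\<in>J. exp (- (decay_const \<gamma> * \<bar>b j * k\<bar> powr \<gamma>)))"
    using True assms(3)
    by (simp add: exp_sum[symmetric] abs_mult powr_mult sum_distrib_left sum_distrib_right sum_negf mult_ac)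
  also have "\<dots> \<le> (\<Prod>j\<in>J. eta_hat (b j * k))"
    using assms(1,2) by (intro prod_mono conjI eta_hat_ge_exp) simp_all
  finally show ?thesis .
qed (use assms in \<open>simp add: decay_const_pos mult_nonneg_nonneg\<close>)

section \<open>The bump \<open>\<eta>\<close> and its rescalings\<close>

lemma continuous_on_if_abs_lipschitz:
  fixes F :: "real \<Rightarrow> real"
  assumes "\<And>x y. \<bar>F x - F y\<bar> \<le> L * \<bar>x - y\<bar>"
  shows "continuous_on UNIV F"
proof (rule lipschitz_on_continuous_on)
  show "(max 0 L)-lipschitz_on UNIV F"
    using assms order_trans[OF assms mult_right_mono[OF max.cobounded2]]
    by (intro lipschitz_onI) (auto simp: dist_real_def)
qed

lemma
  fixes f :: "real \<Rightarrow> real"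
  assumes "continuous_on UNIV f" "\<And>x. R < \<bar>x\<bar> \<Longrightarrow> f x = 0"
  shows integrable_if_supported: "integrable lborel f"
    and integral_if_supported: "integral\<^sup>L lborel f = integral {-R..R} f"
proof -
  have f_eq: "f = (\<lambda>x. f x * indicator {-R..R} x)"
    using assms(2) by (force simp: indicator_def abs_le_iff)
  show "integrable lborel f"
    using assms(1) by (subst f_eq) (auto intro: borel_integrable_atLeastAtMost simp: continuous_on_eq_continuous_at)
  have "set_integrable lborel {-R..R} f"
    using assms(1) by (intro borel_integrable_atLeastAtMost') (rule continuous_on_subset, auto)
  moreover have "integral\<^sup>L lborel f = (LINT x:{-R..R}|lborel. f x)"
    unfolding set_lebesgue_integral_def by (subst f_eq) (simp add: mult.commute)
  ultimately show "integral\<^sup>L lborel f = integral {-R..R} f"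
    using set_borel_integral_eq_integral(2) by simp
qed

lemma eta_eq_max: "eta x = 3/2 * (max 0 (1 - \<bar>x\<bar>))^2"
  by (auto simp: eta_def max_def)

lemma eta_nonneg: "0 \<le> eta x"
  by (simp add: eta_def)

lemma eta_minus: "eta (- x) = eta x"
  by (simp add: eta_def)

lemma eta_eq_0: "1 < \<bar>x\<bar> \<Longrightarrow> eta x = 0"
  by (simp add: eta_def)

lemma eta_le: "eta x \<le> 3/2"
proof -
  have "(max 0 (1 - \<bar>x\<bar>))^2 \<le> 1^2" by (intro power_mono) auto
  then show ?thesis by (simp add: eta_eq_max)
qed

lemma eta_lipschitz: "\<bar>eta x - eta y\<bar> \<le> 3 * \<bar>x - y\<bar>"
proof -
  define a b where "a = max 0 (1 - \<bar>x\<bar>)" and "b = max 0 (1 - \<bar>y\<bar>)"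
  have ab: "\<bar>a - b\<bar> \<le> \<bar>x - y\<bar>" "0 \<le> a" "a \<le> 1" "0 \<le> b" "b \<le> 1"
    unfolding a_def b_def by (auto simp: max_def abs_if)
  have "a^2 - b^2 = (a - b) * (a + b)" by (simp add: power2_eq_square algebra_simps)
  then have "\<bar>a^2 - b^2\<bar> = \<bar>a - b\<bar> * (a + b)" using ab by (simp add: abs_mult)
  also have "\<dots> \<le> \<bar>x - y\<bar> * 2" using ab by (intro mult_mono) auto
  finally show ?thesis
    by (simp add: eta_eq_max a_def[symmetric] b_def[symmetric] abs_mult flip: right_diff_distrib)
qed

lemma continuous_on_eta: "continuous_on UNIV eta"
  using eta_lipschitz by (rule continuous_on_if_abs_lipschitz)

lemma exp_minus_i_real:
  "exp (- (\<i> * complex_of_real y)) = complex_of_real (cos y) - \<i> * complex_of_real (sin y)"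
proof -
  have "exp (- (\<i> * complex_of_real y)) = cis (- y)" by (simp add: cis_conv_exp)
  then show ?thesis by (simp add: complex_eq_iff)
qed

lemma fourier_eq_cos_sin:
  fixes f :: "real \<Rightarrow> real"
  assumes "continuous_on UNIV f" "\<And>x. R < \<bar>x\<bar> \<Longrightarrow> f x = 0"
  shows "fourier f k = complex_of_real (LINT x|lborel. cos (k*x) * f x)
                       - \<i> * complex_of_real (LINT x|lborel. sin (k*x) * f x)"
proof -
  have cos_int: "integrable lborel (\<lambda>x. cos (k*x) * f x)"
    and sin_int: "integrable lborel (\<lambda>x. sin (k*x) * f x)"
    using assms by (auto intro!: integrable_if_supported[of _ R] continuous_intros)
  have "integrable lborel (\<lambda>x. complex_of_real (cos (k*x) * f x))"
    using cos_int by (rule integrable_of_real)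
  moreover have "integrable lborel (\<lambda>x. \<i> * complex_of_real (sin (k*x) * f x))"
    by (rule integrable_mult_right, rule integrable_of_real[OF sin_int])
  ultimately have "fourier f k = (LINT x|lborel. complex_of_real (cos (k*x) * f x))
                           - (LINT x|lborel. \<i> * complex_of_real (sin (k*x) * f x))"
    unfolding fourier_def exp_minus_i_real by (simp add: algebra_simps)
  then show ?thesis by (simp only: integral_mult_right_zero integral_complex_of_real)
qed

lemma integral_sin_mult_even:
  fixes f :: "real \<Rightarrow> real"
  assumes "\<And>x. f (- x) = f x"
  shows "(LINT x|lborel. sin (k*x) * f x) = 0"
proof -
  have "(LINT x|lborel. sin (k*x) * f x) = \<bar>-1\<bar> *\<^sub>R (LINT x|lborel. sin (k*(0 + (-1)*x)) * f (0 + (-1)*x))"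
    by (rule lborel_integral_real_affine) simp
  also have "\<dots> = - (LINT x|lborel. sin (k*x) * f x)" using assms by simp
  finally show ?thesis by simp
qed

definition cos_square_primitive :: "real \<Rightarrow> real \<Rightarrow> real" where
  "cos_square_primitive k x = (if k = 0 then - ((1 - x)^3 / 3)
     else (1 - x)^2 * sin (k*x) / k - 2 * (1 - x) * cos (k*x) / k^2 - 2 * sin (k*x) / k^3)"

lemma has_real_derivative_cos_square_primitive:
  "(cos_square_primitive k has_real_derivative (1 - x)^2 * cos (k*x)) (at x)"
proof (cases "k = 0")
  case True
  then show ?thesis unfolding cos_square_primitive_def[abs_def]
    by (auto intro!: derivative_eq_intros simp: power2_eq_square)
next
  case False
  then show ?thesis unfolding cos_square_primitive_def[abs_def]
    by (auto intro!: derivative_eq_intros simp: field_simps power2_eq_square power3_eq_cube)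
qed

lemma continuous_on_cos_square_primitive: "continuous_on A (cos_square_primitive k)"
  using has_real_derivative_cos_square_primitive
  by (meson DERIV_isCont continuous_at_imp_continuous_on)

lemma has_integral_cos_eta: "((\<lambda>x. cos (k*x) * eta x) has_integral eta_hat k) {-1..1}"
proof -
  define P where "P = cos_square_primitive k"
  have right: "((\<lambda>x. cos (k*x) * eta x) has_integral (3/2 * P 1 - 3/2 * P 0)) {0..1}"
  proof (rule fundamental_theorem_of_calculus_interior)
    show "continuous_on {0..1} (\<lambda>x. 3/2 * P x)"
      unfolding P_def by (intro continuous_intros continuous_on_cos_square_primitive)
    fix x :: real assume x: "x \<in> {0<..<1}"
    have "((\<lambda>x. 3/2 * P x) has_real_derivative 3/2 * ((1 - x)^2 * cos (k*x))) (at x)"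
      unfolding P_def by (intro DERIV_cmult has_real_derivative_cos_square_primitive)
    then show "((\<lambda>x. 3/2 * P x) has_vector_derivative cos (k*x) * eta x) (at x)"
      using x by (simp add: eta_def has_real_derivative_iff_has_vector_derivative mult_ac)
  qed simp
  have left: "((\<lambda>x. cos (k*x) * eta x) has_integral (- 3/2 * P 0 - (- 3/2 * P 1))) {-1..0}"
  proof -
    have "((\<lambda>x. - 3/2 * P (- x)) has_vector_derivative cos (k*x) * eta x) (at x)"
      if x: "x \<in> {-1<..<0}" for x
    proof -
      have "((\<lambda>x. - 3/2 * P (- x)) has_real_derivative - 3/2 * (((1 - (- x))^2 * cos (k*(- x))) * (-1))) (at x)"
        unfolding P_def
        by (intro DERIV_cmult DERIV_chain2[OF has_real_derivative_cos_square_primitive] derivative_eq_intros) auto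
      then show ?thesis
        using x by (simp add: eta_def has_real_derivative_iff_has_vector_derivative mult_ac)
    qed
    moreover have "continuous_on {-1..0} (\<lambda>x. - 3/2 * P (- x))"
      unfolding P_def
      by (intro continuous_intros continuous_on_compose2[OF continuous_on_cos_square_primitive[of UNIV]]) auto
    ultimately show ?thesis
      using fundamental_theorem_of_calculus_interior[of "-1" 0 "\<lambda>x. - 3/2 * P (- x)"] by simp
  qed
  have "((\<lambda>x. cos (k*x) * eta x) has_integral ((- 3/2 * P 0 - (- 3/2 * P 1)) + (3/2 * P 1 - 3/2 * P 0))) {-1..1}"
    by (rule has_integral_combine[OF _ _ left right]) auto
  moreover have "(- 3/2 * P 0 - (- 3/2 * P 1)) + (3/2 * P 1 - 3/2 * P 0) = eta_hat k"
    by (simp add: P_def cos_square_primitive_def eta_hat_def field_simps power2_eq_square power3_eq_cube)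
  ultimately show ?thesis by simp
qed

lemma integral_cos_eta: "(LINT x|lborel. cos (k*x) * eta x) = eta_hat k"
proof -
  have "(LINT x|lborel. cos (k*x) * eta x) = integral {-1..1} (\<lambda>x. cos (k*x) * eta x)"
    by (rule integral_if_supported)
       (auto intro!: continuous_intros continuous_on_eta[THEN continuous_on_subset] simp: eta_eq_0)
  also have "\<dots> = eta_hat k" using has_integral_cos_eta by (rule integral_unique)
  finally show ?thesis .
qed

lemma fourier_eta: "fourier eta k = complex_of_real (eta_hat k)"
  using fourier_eq_cos_sin[OF continuous_on_eta, of 1 k]
  by (simp add: eta_eq_0 integral_cos_eta integral_sin_mult_even eta_minus)

lemma integral_eta: "integral\<^sup>L lborel eta = 1"
  using integral_cos_eta[of 0] by (simp add: eta_hat_def)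

definition eta_scaled :: "real \<Rightarrow> real \<Rightarrow> real" where
  "eta_scaled b x = (1 / b) * eta (x / b)"

lemma eta_n_eq_eta_scaled: "eta_n a n = eta_scaled (a n)"
  by (simp add: fun_eq_iff eta_n_def eta_scaled_def)

section \<open>Convolution with a mollifier\<close>

definition lipschitz_bump :: "(real \<Rightarrow> real) \<Rightarrow> real \<Rightarrow> real \<Rightarrow> real \<Rightarrow> bool" where
  "lipschitz_bump F M L R \<longleftrightarrow> (\<forall>x. 0 \<le> F x \<and> F x \<le> M \<and> F (- x) = F x)
     \<and> (\<forall>x y. \<bar>F x - F y\<bar> \<le> L * \<bar>x - y\<bar>) \<and> (\<forall>x. R < \<bar>x\<bar> \<longrightarrow> F x = 0)"

definition mollifier :: "(real \<Rightarrow> real) \<Rightarrow> real \<Rightarrow> bool" where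
  "mollifier h b \<longleftrightarrow> continuous_on UNIV h \<and> (\<forall>x. 0 \<le> h x \<and> h (- x) = h x)
     \<and> (\<forall>x. b < \<bar>x\<bar> \<longrightarrow> h x = 0) \<and> integral\<^sup>L lborel h = 1"

lemma continuous_on_lipschitz_bump: "lipschitz_bump F M L R \<Longrightarrow> continuous_on UNIV F"
  unfolding lipschitz_bump_def by (auto intro: continuous_on_if_abs_lipschitz)

lemma integrable_lipschitz_bump: "lipschitz_bump F M L R \<Longrightarrow> integrable lborel F"
  by (rule integrable_if_supported[OF continuous_on_lipschitz_bump]) (auto simp: lipschitz_bump_def)

lemma lipschitz_bump_nonneg:
  assumes "lipschitz_bump F M L R"
  shows "0 \<le> M" "0 \<le> L"
proof -
  have "0 \<le> F 0" "F 0 \<le> M" "\<bar>F 1 - F 0\<bar> \<le> L * \<bar>1 - 0\<bar>"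
    using assms unfolding lipschitz_bump_def by blast+
  then show "0 \<le> M" "0 \<le> L" using abs_ge_zero[of "F 1 - F 0"] by simp_all
qed

lemma integrable_mollifier: "mollifier h b \<Longrightarrow> integrable lborel h"
  by (rule integrable_if_supported[of h b]) (auto simp: mollifier_def)

lemma
  assumes "0 < b"
  shows mollifier_eta_scaled: "mollifier (eta_scaled b) b"
    and lipschitz_bump_eta_scaled: "lipschitz_bump (eta_scaled b) (3 / (2*b)) (3 / b^2) b"
proof -
  have "(LINT x|lborel. eta_scaled b x) = \<bar>b\<bar> *\<^sub>R (LINT x|lborel. eta_scaled b (0 + b * x))"
    using assms by (intro lborel_integral_real_affine) simp
  also have "\<dots> = 1" using assms by (simp add: eta_scaled_def integral_eta)
  finally have "integral\<^sup>L lborel (eta_scaled b) = 1" .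
  moreover have "continuous_on UNIV (eta_scaled b)"
    unfolding eta_scaled_def using assms
    by (intro continuous_intros continuous_on_compose2[OF continuous_on_eta]) auto
  ultimately show "mollifier (eta_scaled b) b"
    using assms eta_minus[of "_ / b"]
    by (auto simp: mollifier_def eta_scaled_def eta_nonneg eta_eq_0 abs_divide)
  have "\<bar>eta_scaled b x - eta_scaled b y\<bar> \<le> 3 / b^2 * \<bar>x - y\<bar>" for x y
  proof -
    have "\<bar>eta_scaled b x - eta_scaled b y\<bar> = (1/b) * \<bar>eta (x/b) - eta (y/b)\<bar>"
      using assms by (simp add: eta_scaled_def abs_divide flip: diff_divide_distrib)
    also have "\<dots> \<le> (1/b) * (3 * \<bar>x/b - y/b\<bar>)" using assms eta_lipschitz by (intro mult_left_mono) auto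
    also have "\<dots> = 3 / b^2 * \<bar>x - y\<bar>"
      using assms by (simp add: power2_eq_square abs_divide field_simps flip: diff_divide_distrib)
    finally show ?thesis .
  qed
  moreover have "eta_scaled b x \<le> 3 / (2*b)" for x
    using assms eta_le[of "x/b"] by (simp add: eta_scaled_def field_simps)
  ultimately show "lipschitz_bump (eta_scaled b) (3 / (2*b)) (3 / b^2) b"
    using assms eta_minus[of "_ / b"]
    by (auto simp: lipschitz_bump_def eta_scaled_def eta_nonneg eta_eq_0 abs_divide)
qed

lemma fourier_eta_scaled:
  assumes "0 < b"
  shows "fourier (eta_scaled b) k = complex_of_real (eta_hat (b * k))"
proof -
  have "fourier (eta_scaled b) k = \<bar>b\<bar> *\<^sub>R (LINT x|lborel.
      exp (- (\<i> * complex_of_real (k * (0 + b * x)))) * complex_of_real (eta_scaled b (0 + b * x)))"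
    unfolding fourier_def using assms by (intro lborel_integral_real_affine) simp
  also have "\<dots> = complex_of_real b * (LINT x|lborel. complex_of_real (1/b)
      * (exp (- (\<i> * complex_of_real ((b * k) * x))) * complex_of_real (eta x)))"
    using assms by (simp add: eta_scaled_def scaleR_conv_of_real mult_ac)
  also have "\<dots> = fourier eta (b * k)"
    using assms by (simp add: fourier_def)
  finally show ?thesis by (simp add: fourier_eta)
qed

context
  fixes F h :: "real \<Rightarrow> real" and M L R b :: real
  assumes F: "lipschitz_bump F M L R" and h: "mollifier h b"
begin

lemma integrable_conv_integrand: "integrable lborel (\<lambda>y. F (x - y) * h y)"
proof (rule Bochner_Integration.integrable_bound)
  show "integrable lborel (\<lambda>y. M * h y)" using integrable_mollifier[OF h] by simp
  have "continuous_on UNIV (\<lambda>y. F (x - y) * h y)"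
    using h by (auto intro!: continuous_intros continuous_on_compose2[OF continuous_on_lipschitz_bump[OF F]]
        simp: mollifier_def)
  then show "(\<lambda>y. F (x - y) * h y) \<in> borel_measurable lborel"
    using borel_measurable_continuous_onI by simp
  show "AE y in lborel. norm (F (x - y) * h y) \<le> norm (M * h y)"
    using F h lipschitz_bump_nonneg[OF F]
    by (intro AE_I2) (auto simp: lipschitz_bump_def mollifier_def abs_mult intro!: mult_right_mono)
qed

lemma abs_conv_diff_le:
  assumes "\<And>y. \<bar>y\<bar> \<le> b \<Longrightarrow> \<bar>F (x - y) - G y\<bar> \<le> C" "integrable lborel (\<lambda>y. G y * h y)"
  shows "\<bar>conv F h x - (LINT y|lborel. G y * h y)\<bar> \<le> C"
proof -
  have "\<bar>conv F h x - (LINT y|lborel. G y * h y)\<bar> = \<bar>LINT y|lborel. (F (x - y) - G y) * h y\<bar>"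
    unfolding conv_def using integrable_conv_integrand assms(2)
    by (simp add: left_diff_distrib Bochner_Integration.integral_diff)
  also have "\<dots> \<le> (LINT y|lborel. C * h y)"
  proof (rule integral_abs_bound_integral)
    show "integrable lborel (\<lambda>y. (F (x - y) - G y) * h y)"
      using integrable_conv_integrand assms(2) by (simp add: left_diff_distrib)
    show "integrable lborel (\<lambda>y. C * h y)" using integrable_mollifier[OF h] by simp
    show "\<bar>(F (x - y) - G y) * h y\<bar> \<le> C * h y" for y
      using assms(1)[of y] h by (cases "b < \<bar>y\<bar>") (auto simp: mollifier_def abs_mult mult_right_mono)
  qed
  also have "\<dots> = C" using h by (simp add: mollifier_def)
  finally show ?thesis .
qed

lemma abs_conv_minus_le: "\<bar>conv F h x - F x\<bar> \<le> L * b"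
proof -
  have "\<bar>F (x - y) - F x\<bar> \<le> L * b" if "\<bar>y\<bar> \<le> b" for y
  proof -
    have "\<bar>F (x - y) - F x\<bar> \<le> L * \<bar>y\<bar>" using F by (auto simp: lipschitz_bump_def dest: spec2[of _ "x - y" x])
    also have "\<dots> \<le> L * b"
      using lipschitz_bump_nonneg[OF F] that by (intro mult_left_mono) auto
    finally show ?thesis .
  qed
  then show ?thesis
    using abs_conv_diff_le[of x "\<lambda>_. F x"] integrable_mollifier[OF h] h
    by (simp add: mollifier_def)
qed

lemma lipschitz_bump_conv: "lipschitz_bump (conv F h) M L (R + b)"
  unfolding lipschitz_bump_def
proof (intro conjI allI impI)
  fix x
  show "0 \<le> conv F h x"
    unfolding conv_def using F h by (intro integral_nonneg_AE AE_I2) (auto simp: lipschitz_bump_def mollifier_def)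
  have "conv F h x \<le> (LINT y|lborel. M * h y)"
    unfolding conv_def using integrable_conv_integrand integrable_mollifier[OF h] F h
    by (intro integral_mono) (auto simp: lipschitz_bump_def mollifier_def intro!: mult_right_mono)
  then show "conv F h x \<le> M" using h by (simp add: mollifier_def)
  have "conv F h (- x) = \<bar>-1\<bar> *\<^sub>R (LINT y|lborel. F (- x - (0 + (-1) * y)) * h (0 + (-1) * y))"
    unfolding conv_def by (rule lborel_integral_real_affine) simp
  also have "\<dots> = conv F h x"
    unfolding conv_def using F h by (simp add: lipschitz_bump_def mollifier_def) (metis minus_diff_eq)
  finally show "conv F h (- x) = conv F h x" .
next
  fix x y
  have "\<bar>F (x - z) - F (y - z)\<bar> \<le> L * \<bar>x - y\<bar>" for z
    using F unfolding lipschitz_bump_def by (metis diff_diff_eq2 diff_add_cancel add_diff_cancel_right)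
  then show "\<bar>conv F h x - conv F h y\<bar> \<le> L * \<bar>x - y\<bar>"
    using abs_conv_diff_le[of x "\<lambda>z. F (y - z)"] integrable_conv_integrand by (simp add: conv_def)
next
  fix x assume x: "R + b < \<bar>x\<bar>"
  have vanish: "F (x - y) * h y = 0" for y
  proof (cases "b < \<bar>y\<bar>")
    case True
    then show ?thesis using h by (simp add: mollifier_def)
  next
    case False
    then have "R < \<bar>x - y\<bar>" using x by linarith
    then show ?thesis using F by (simp add: lipschitz_bump_def)
  qed
  have "(\<lambda>y. F (x - y) * h y) = (\<lambda>y. 0)" by (rule ext) (rule vanish)
  then show "conv F h x = 0" unfolding conv_def by simp
qed

lemma fourier_conv: "fourier (conv F h) k = fourier F k * fourier h k"
proof -
  define e where "e x = exp (- (\<i> * complex_of_real (k * x)))" for x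
  define f where "f x y = e x * complex_of_real (F (x - y) * h y)" for x y
  have "continuous_on UNIV (\<lambda>p::real \<times> real. f (fst p) (snd p))"
    unfolding f_def e_def using h
    by (auto intro!: continuous_intros continuous_on_compose2[OF continuous_on_lipschitz_bump[OF F]]
        continuous_on_compose2[of UNIV h] simp: mollifier_def)
  then have meas: "(\<lambda>p. f (fst p) (snd p)) \<in> borel_measurable (lborel \<Otimes>\<^sub>M lborel)"
    by (simp add: borel_measurable_continuous_onI lborel_prod)
  have norm_f: "norm (f x y) = F (x - y) * h y" for x y
    using F h by (simp add: f_def e_def norm_mult norm_exp_eq_Re lipschitz_bump_def mollifier_def)
  have "integrable (lborel \<Otimes>\<^sub>M lborel) (\<lambda>p. f (fst p) (snd p))"
  proof (rule lborel_pair.Fubini_integrable[OF meas])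
    show "integrable lborel (\<lambda>x. LINT y|lborel. norm (f (fst (x, y)) (snd (x, y))))"
      using integrable_lipschitz_bump[OF lipschitz_bump_conv] by (simp add: norm_f conv_def[abs_def])
    show "AE x in lborel. integrable lborel (\<lambda>y. f (fst (x, y)) (snd (x, y)))"
      unfolding f_def fst_conv snd_conv
      by (intro AE_I2 integrable_mult_right integrable_of_real integrable_conv_integrand)
  qed
  then have int: "integrable (lborel \<Otimes>\<^sub>M lborel) (case_prod f)"
    by (simp add: case_prod_beta')
  have "fourier (conv F h) k = (LINT x|lborel. LINT y|lborel. f x y)"
    unfolding fourier_def conv_def f_def e_def
    by (simp only: integral_mult_right_zero integral_complex_of_real)
  also have "\<dots> = (LINT y|lborel. LINT x|lborel. f x y)"
    by (rule lborel_pair.Fubini_integral[OF int, symmetric])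
  also have "\<dots> = (LINT y|lborel. (e y * complex_of_real (h y)) * fourier F k)"
  proof (rule Bochner_Integration.integral_cong[OF refl])
    fix y
    have "(LINT x|lborel. f x y) = \<bar>1\<bar> *\<^sub>R (LINT z|lborel. f (y + 1 * z) y)"
      by (rule lborel_integral_real_affine) simp
    also have "\<dots> = (LINT z|lborel. (e y * complex_of_real (h y)) * (e z * complex_of_real (F z)))"
      unfolding f_def e_def by (simp add: algebra_simps flip: exp_add)
    also have "\<dots> = (e y * complex_of_real (h y)) * fourier F k"
      unfolding fourier_def e_def by (rule integral_mult_right_zero)
    finally show "(LINT x|lborel. f x y) = (e y * complex_of_real (h y)) * fourier F k" .
  qed
  also have "\<dots> = fourier h k * fourier F k"
    unfolding fourier_def e_def by (rule integral_mult_left_zero)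
  finally show ?thesis by (simp add: mult.commute)
qed

end

section \<open>Passing to the limit\<close>

lemma lipschitz_bump_mono_radius:
  "lipschitz_bump F M L R \<Longrightarrow> R \<le> R' \<Longrightarrow> lipschitz_bump F M L R'"
  by (simp add: lipschitz_bump_def)

lemma lipschitz_bump_limit:
  assumes F: "\<And>n. lipschitz_bump (F n) M L R" and lim: "\<And>x. (\<lambda>n. F n x) \<longlonglongrightarrow> G x"
  shows "lipschitz_bump G M L R"
  unfolding lipschitz_bump_def
proof (intro conjI allI impI)
  fix x
  show "0 \<le> G x" "G x \<le> M"
    using F by (auto intro: LIMSEQ_le_const LIMSEQ_le_const2 lim simp: lipschitz_bump_def)
  have "(\<lambda>n. F n x) \<longlonglongrightarrow> G (- x)"
    using lim[of "- x"] F by (simp add: lipschitz_bump_def)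
  then show "G (- x) = G x" using lim by (rule LIMSEQ_unique)
next
  fix x y
  have "(\<lambda>n. \<bar>F n x - F n y\<bar>) \<longlonglongrightarrow> \<bar>G x - G y\<bar>" by (intro tendsto_intros lim)
  then show "\<bar>G x - G y\<bar> \<le> L * \<bar>x - y\<bar>"
    using F by (auto intro: LIMSEQ_le_const2 simp: lipschitz_bump_def)
next
  fix x assume "R < \<bar>x\<bar>"
  then have "(\<lambda>n. F n x) = (\<lambda>n. 0)" using F by (simp add: lipschitz_bump_def)
  then show "G x = 0" using lim[of x] LIMSEQ_const_iff by metis
qed

lemma fourier_tendsto:
  assumes F: "\<And>n. lipschitz_bump (F n) M L R" and lim: "\<And>x. (\<lambda>n. F n x) \<longlonglongrightarrow> G x"
  shows "(\<lambda>n. fourier (F n) k) \<longlonglongrightarrow> fourier G k"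
  unfolding fourier_def
proof (rule integral_dominated_convergence[where w = "\<lambda>x. M * indicator {-R..R} x"])
  have meas: "F n \<in> borel_measurable borel" for n
    using continuous_on_lipschitz_bump[OF F] by (rule borel_measurable_continuous_onI)
  then have "G \<in> borel_measurable borel"
    by (rule borel_measurable_LIMSEQ_real[OF lim])
  then show "(\<lambda>x. exp (- (\<i> * complex_of_real (k * x))) * complex_of_real (G x)) \<in> borel_measurable lborel"
    by measurable
  show "(\<lambda>x. exp (- (\<i> * complex_of_real (k * x))) * complex_of_real (F n x)) \<in> borel_measurable lborel" for n
    using meas[of n] by measurable
  show "integrable lborel (\<lambda>x. M * indicator {-R..R} x)"
    using borel_integrable_atLeastAtMost[of "-R" R "\<lambda>_. M"] by simp
  show "AE x in lborel. (\<lambda>n. exp (- (\<i> * complex_of_real (k * x))) * complex_of_real (F n x))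
          \<longlonglongrightarrow> exp (- (\<i> * complex_of_real (k * x))) * complex_of_real (G x)"
    using lim by (intro AE_I2 tendsto_intros)
  show "AE x in lborel. norm (exp (- (\<i> * complex_of_real (k * x))) * complex_of_real (F n x))
          \<le> M * indicator {-R..R} x" for n
    using F[of n] by (intro AE_I2) (auto simp: norm_mult norm_exp_eq_Re lipschitz_bump_def indicator_def)
qed

context
  fixes a :: "nat \<Rightarrow> real"
  assumes a_pos: "\<And>n. 1 \<le> n \<Longrightarrow> 0 < a n"
begin

lemma lipschitz_bump_gs: "lipschitz_bump (gs a n) (3 / (2 * a 1)) (3 / (a 1)^2) (\<Sum>j\<le>n. a (Suc j))"
proof (induction n)
  case 0
  show ?case using lipschitz_bump_eta_scaled[of "a 1"] a_pos by (simp add: eta_n_eq_eta_scaled)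
next
  case (Suc n)
  have "mollifier (eta_scaled (a (Suc (Suc n)))) (a (Suc (Suc n)))"
    using a_pos by (intro mollifier_eta_scaled) simp
  with Suc.IH show ?case
    using lipschitz_bump_conv by (simp add: eta_n_eq_eta_scaled)
qed

lemma fourier_gs: "fourier (gs a n) k = complex_of_real (\<Prod>j\<le>n. eta_hat (a (Suc j) * k))"
proof (induction n)
  case 0
  show ?case using a_pos by (simp add: eta_n_eq_eta_scaled fourier_eta_scaled)
next
  case (Suc n)
  have "mollifier (eta_scaled (a (Suc (Suc n)))) (a (Suc (Suc n)))"
    using a_pos by (intro mollifier_eta_scaled) simp
  with Suc.IH show ?case
    using fourier_conv[OF lipschitz_bump_gs] fourier_eta_scaled a_pos
    by (simp add: eta_n_eq_eta_scaled mult.commute)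
qed

lemma gs_tendsto_g_lim:
  assumes "summable (\<lambda>n. a (Suc n))"
  shows "(\<lambda>n. gs a n x) \<longlonglongrightarrow> g_lim a x"
proof -
  have "summable (\<lambda>n. 3 / (a 1)^2 * a (Suc (Suc n)))"
    using assms by (intro summable_mult) (subst summable_Suc_iff)
  moreover have "norm (gs a (Suc n) x - gs a n x) \<le> 3 / (a 1)^2 * a (Suc (Suc n))" for n
    using abs_conv_minus_le[OF lipschitz_bump_gs mollifier_eta_scaled] a_pos
    by (simp add: eta_n_eq_eta_scaled)
  ultimately have "summable (\<lambda>n. gs a (Suc n) x - gs a n x)"
    by (rule summable_comparison_test')
  then have "convergent (\<lambda>n. gs a 0 x + (\<Sum>j<n. gs a (Suc j) x - gs a j x))"
    by (intro convergent_add convergent_const) (simp add: summable_iff_convergent)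
  then have "convergent (\<lambda>n. gs a n x)"
    by (simp add: sum_lessThan_telescope[of "\<lambda>j. gs a j x"] del: gs.simps)
  then show ?thesis by (simp add: g_lim_def convergent_LIMSEQ_iff)
qed

lemma lipschitz_bump_gs_suminf:
  assumes "summable (\<lambda>n. a (Suc n))"
  shows "lipschitz_bump (gs a n) (3 / (2 * a 1)) (3 / (a 1)^2) (\<Sum>n. a (Suc n))"
  using lipschitz_bump_gs
proof (rule lipschitz_bump_mono_radius)
  show "(\<Sum>j\<le>n. a (Suc j)) \<le> (\<Sum>n. a (Suc n))"
    using assms a_pos by (intro sum_le_suminf) (auto intro: less_imp_le)
qed

lemma lipschitz_bump_g_lim:
  assumes "summable (\<lambda>n. a (Suc n))"
  shows "lipschitz_bump (g_lim a) (3 / (2 * a 1)) (3 / (a 1)^2) (\<Sum>n. a (Suc n))"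
  using lipschitz_bump_gs_suminf[OF assms] gs_tendsto_g_lim[OF assms] by (rule lipschitz_bump_limit)

lemma fourier_g_lim:
  assumes "summable (\<lambda>n. a (Suc n))"
  shows "(\<lambda>n. complex_of_real (\<Prod>j\<le>n. eta_hat (a (Suc j) * k))) \<longlonglongrightarrow> fourier (g_lim a) k"
  using fourier_tendsto[OF lipschitz_bump_gs_suminf[OF assms] gs_tendsto_g_lim[OF assms]]
  by (simp add: fourier_gs)

end

theorem mainTheorem7:
  fixes \<gamma> c l :: real and a :: "nat \<Rightarrow> real"
  assumes "0 < \<gamma>" "\<gamma> < 1" "c > 0" "l > 0"
    and "\<And>n. n \<ge> 1 \<Longrightarrow> a n > 0"
    and "summable (\<lambda>n. a (Suc n))"
    and "summable (\<lambda>n. a (Suc n) powr \<gamma>)"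
    and "(\<Sum>n. a (Suc n)) < l"
    and "(\<Sum>n. a (Suc n) powr \<gamma>)
           \<le> c * ((2 - \<gamma>) / \<gamma>) powr ((\<gamma> - 2) / 2) * (7 / 40 :: real) powr (- \<gamma> / 2)"
  shows "(\<forall>x. g_lim a x \<ge> 0) \<and> (\<forall>x. g_lim a (- x) = g_lim a x) \<and> positive_type (g_lim a)
         \<and> (\<forall>x. \<bar>x\<bar> > l \<longrightarrow> g_lim a x = 0)
         \<and> (\<forall>k. Im (fourier (g_lim a) k) = 0 \<and> Re (fourier (g_lim a) k) \<ge> exp (- c * \<bar>k\<bar> powr \<gamma>))"
proof -
  have bump: "lipschitz_bump (g_lim a) (3 / (2 * a 1)) (3 / (a 1)^2) (\<Sum>n. a (Suc n))"
    using assms(5,6) by (rule lipschitz_bump_g_lim)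
  have hat: "Im (fourier (g_lim a) k) = 0 \<and> exp (- c * \<bar>k\<bar> powr \<gamma>) \<le> Re (fourier (g_lim a) k)" for k
  proof -
    have lim: "(\<lambda>n. complex_of_real (\<Prod>j\<le>n. eta_hat (a (Suc j) * k))) \<longlonglongrightarrow> fourier (g_lim a) k"
      using assms(5,6) by (rule fourier_g_lim)
    have "decay_const \<gamma> * (\<Sum>j\<le>n. a (Suc j) powr \<gamma>) \<le> c" for n
    proof (rule decay_const_mult_le)
      have "(\<Sum>j\<le>n. a (Suc j) powr \<gamma>) \<le> (\<Sum>n. a (Suc n) powr \<gamma>)"
        using assms(7) by (intro sum_le_suminf) auto
      with assms(9) show "(\<Sum>j\<le>n. a (Suc j) powr \<gamma>) \<le> c * ((2 - \<gamma>)/\<gamma>) powr ((\<gamma> - 2)/2) * (7/40) powr (- \<gamma>/2)"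
        by simp
    qed (use assms(1,2) in auto)
    then have "exp (- c * \<bar>k\<bar> powr \<gamma>) \<le> (\<Prod>j\<le>n. eta_hat (a (Suc j) * k))" for n
      using assms(1,2,5) by (intro prod_eta_hat_ge_exp) (auto intro: less_imp_le)
    moreover have "(\<lambda>n. \<Prod>j\<le>n. eta_hat (a (Suc j) * k)) \<longlonglongrightarrow> Re (fourier (g_lim a) k)"
      using tendsto_Re[OF lim] by (simp only: Re_complex_of_real)
    moreover have "(\<lambda>n. 0) \<longlonglongrightarrow> Im (fourier (g_lim a) k)"
      using tendsto_Im[OF lim] by (simp only: Im_complex_of_real)
    ultimately show ?thesis by (auto intro: LIMSEQ_le_const simp: LIMSEQ_const_iff)
  qed
  have "positive_type (g_lim a)"
    unfolding positive_type_def using hat by (meson exp_ge_zero order_trans)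
  moreover have "g_lim a x = 0" if "l < \<bar>x\<bar>" for x
    using bump assms(8) that by (simp add: lipschitz_bump_def)
  ultimately show ?thesis
    using bump hat by (simp add: lipschitz_bump_def)
qed

end
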